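(* Let $k\ge 0$ and $n>2k+1$ be integers, and let $\sigma$ be a maximal simplex of $\mathrm{VR}(\mathbb{Z}^2;k)$. Then $\pi_n(\sigma)$ is a maximal simplex of $\mathrm{VR}(T_{n,n};k)$.
   Context: $\mathbb{Z}^2$ carries the $l^1$ metric. $T_{n,n}=\mathbb{Z}^2/(n\mathbb{Z}\times n\mathbb{Z})$ with quotient map $\pi_n$ (reduction of both coordinates mod $n$) and quotient metric $d([x],[y])=\min\{d(x',y'): \pi_n(x')=[x],\pi_n(y')=[y]\}$. $\mathrm{VR}(X;r)$ is the simplicial complex on vertex set $X$ whose simplices are the finite nonempty subsets of diameter at most $r$; a maximal simplex is one not properly contained in another simplex. *)

theory Defs
  imports Main
begin

definition l1_dist :: "int \<times> int \<Rightarrow> int \<times> int \<Rightarrow> int" where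
  "l1_dist p q = \<bar>fst p - fst q\<bar> + \<bar>snd p - snd q\<bar>"

text \<open>Quotient map Z^2 -> T_{n,n}; classes represented by residues in [0,n)^2\<close>
definition torus_proj :: "int \<Rightarrow> int \<times> int \<Rightarrow> int \<times> int" where
  "torus_proj n p = (fst p mod n, snd p mod n)"

definition torus_dist :: "int \<Rightarrow> int \<times> int \<Rightarrow> int \<times> int \<Rightarrow> int" where
  "torus_dist n a b = int (LEAST d. \<exists>x y. torus_proj n x = a \<and> torus_proj n y = b
                                          \<and> d = nat (l1_dist x y))"

definition vr_simplex :: "'a set \<Rightarrow> ('a \<Rightarrow> 'a \<Rightarrow> 'b::linorder) \<Rightarrow> 'b \<Rightarrow> 'a set \<Rightarrow> bool" where
  "vr_simplex X d r \<sigma> \<longleftrightarrow> finite \<sigma> \<and> \<sigma> \<noteq> {} \<and> \<sigma> \<subseteq> X \<and> (\<forall>x\<in>\<sigma>. \<forall>y\<in>\<sigma>. d x y \<le> r)"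

definition vr_maximal_simplex :: "'a set \<Rightarrow> ('a \<Rightarrow> 'a \<Rightarrow> 'b::linorder) \<Rightarrow> 'b \<Rightarrow> 'a set \<Rightarrow> bool" where
  "vr_maximal_simplex X d r \<sigma> \<longleftrightarrow> vr_simplex X d r \<sigma> \<and>
     (\<forall>\<tau>. vr_simplex X d r \<tau> \<and> \<sigma> \<subseteq> \<tau> \<longrightarrow> \<tau> = \<sigma>)"

end

theory Submission
  imports Defs
begin

text \<open>
  Write \<open>\<pi>\<close> for \<open>\<pi>\<^sub>n\<close>. Since \<open>\<pi>\<close> does not increase distances, \<open>\<pi>(\<sigma>)\<close> is a simplex.
  For maximality, let \<open>c\<close> be a torus point within \<open>k\<close> of all of \<open>\<pi>(\<sigma>)\<close>; every
  \<open>s \<in> \<sigma>\<close> then has a lift \<open>y\<^sub>s\<close> of \<open>c\<close> with \<open>|s - y\<^sub>s| \<le> k\<close>. For adjacent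
  \<open>s, s' \<in> \<sigma>\<close> the lifts \<open>y\<^sub>s, y\<^sub>s'\<close> are at distance at most \<open>2k + 1 < n\<close>, so they coincide.
  A maximal simplex of \<open>\<int>\<^sup>2\<close> is geodesically connected: from any \<open>s \<noteq> s\<^sub>0\<close> in \<open>\<sigma>\<close> one can
  step to a neighbour in \<open>\<sigma>\<close> that is closer to \<open>s\<^sub>0\<close>. Hence all the \<open>y\<^sub>s\<close> agree, the common
  lift is within \<open>k\<close> of all of \<open>\<sigma>\<close>, and so lies in \<open>\<sigma>\<close> by maximality.
\<close>

lemma vr_maximal_simplex_absorbs:
  assumes "vr_maximal_simplex X d r \<sigma>" "x \<in> X" "d x x \<le> r"
    and "\<forall>y\<in>\<sigma>. d x y \<le> r \<and> d y x \<le> r"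
  shows "x \<in> \<sigma>"
proof -
  have "vr_simplex X d r (insert x \<sigma>)"
    using assms unfolding vr_maximal_simplex_def vr_simplex_def by auto
  then show ?thesis
    using assms(1) unfolding vr_maximal_simplex_def by blast
qed

lemma vr_maximal_simplexI:
  assumes "vr_simplex X d r \<sigma>"
    and "\<And>x. x \<in> X \<Longrightarrow> \<forall>y\<in>\<sigma>. d y x \<le> r \<Longrightarrow> x \<in> \<sigma>"
  shows "vr_maximal_simplex X d r \<sigma>"
  using assms unfolding vr_maximal_simplex_def vr_simplex_def by blast

lemma vr_simplex_image:
  assumes "vr_simplex X d r \<sigma>" "f ` X \<subseteq> Y"
    and "\<And>x y. x \<in> \<sigma> \<Longrightarrow> y \<in> \<sigma> \<Longrightarrow> d' (f x) (f y) \<le> d x y"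
  shows "vr_simplex Y d' r (f ` \<sigma>)"
proof -
  have "d' u v \<le> r" if "u \<in> f ` \<sigma>" "v \<in> f ` \<sigma>" for u v
  proof -
    obtain x y where "x \<in> \<sigma>" "y \<in> \<sigma>" "u = f x" "v = f y"
      using \<open>u \<in> f ` \<sigma>\<close> \<open>v \<in> f ` \<sigma>\<close> by blast
    then have "d' u v \<le> d x y"
      using assms(3) by blast
    also have "\<dots> \<le> r"
      using assms(1) \<open>x \<in> \<sigma>\<close> \<open>y \<in> \<sigma>\<close> unfolding vr_simplex_def by blast
    finally show ?thesis .
  qed
  then show ?thesis
    using assms(1,2) unfolding vr_simplex_def by blast
qed

lemma l1_dist_self [simp]: "l1_dist p p = 0"
  unfolding l1_dist_def by simp

lemma l1_dist_commute: "l1_dist p q = l1_dist q p"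
  unfolding l1_dist_def by simp

lemma l1_dist_triangle: "l1_dist p r \<le> l1_dist p q + l1_dist q r"
  unfolding l1_dist_def by simp

lemma l1_dist_nonneg: "0 \<le> l1_dist p q"
  unfolding l1_dist_def by simp

lemma l1_dist_eq_0_iff: "l1_dist p q = 0 \<longleftrightarrow> p = q"
  unfolding l1_dist_def by (auto simp: prod_eq_iff)

text \<open>
  The rotated coordinates \<open>u = x + y\<close>, \<open>v = x - y\<close> turn the \<open>l\<^sup>1\<close> metric into the
  \<open>l\<^sup>\<infinity>\<close> metric; they take all pairs \<open>(u, v)\<close> with \<open>u - v\<close> even, and the unit steps of
  \<open>\<int>\<^sup>2\<close> are exactly the steps by \<open>\<plusminus>1\<close> in both \<open>u\<close> and \<open>v\<close>.
\<close>

definition rot_u :: "int \<times> int \<Rightarrow> int" where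
  "rot_u p = fst p + snd p"

definition rot_v :: "int \<times> int \<Rightarrow> int" where
  "rot_v p = fst p - snd p"

lemma l1_dist_eq_max_rot: "l1_dist p q = max \<bar>rot_u p - rot_u q\<bar> \<bar>rot_v p - rot_v q\<bar>"
  unfolding l1_dist_def rot_u_def rot_v_def max_def by arith

lemma even_rot_diff: "even ((rot_u p - rot_u q) - (rot_v p - rot_v q))"
  unfolding rot_u_def rot_v_def by simp

lemma rot_eq_iff: "rot_u p = rot_u q \<and> rot_v p = rot_v q \<longleftrightarrow> p = q"
  unfolding rot_u_def rot_v_def by (auto simp: prod_eq_iff)

lemma obtain_rot_unit_step:
  assumes "\<bar>a\<bar> = 1" "\<bar>b\<bar> = 1"
  obtains p where "rot_u p = rot_u s + a" "rot_v p = rot_v s + b"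
proof -
  have "a = -1 \<or> a = 1" "b = -1 \<or> b = 1"
    using assms by auto
  then show thesis
    using that[of "(fst s + (a + b) div 2, snd s + (a - b) div 2)"]
    by (elim disjE) (simp_all add: rot_u_def rot_v_def)
qed

lemma bounded_int_set_step:
  fixes A :: "int set"
  assumes diam: "\<forall>x\<in>A. \<forall>y\<in>A. \<bar>x - y\<bar> \<le> k" and "1 \<le> k"
    and a: "a \<in> A" and b: "b \<in> A"
  obtains d where "\<bar>d\<bar> = 1" "\<forall>x\<in>A. \<bar>x - (a + d)\<bar> \<le> k"
    "\<bar>b - (a + d)\<bar> = (if b = a then 1 else \<bar>b - a\<bar> - 1)"
proof -
  have near: "\<bar>x - a\<bar> \<le> k" "\<bar>x - b\<bar> \<le> k" if "x \<in> A" for x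
    using diam that a b by blast+
  \<comment> \<open>if \<open>a - k \<in> A\<close> then \<open>A \<subseteq> [a - k, a]\<close> and stepping down is safe, otherwise stepping up is\<close>
  consider "a < b" | "b < a" | "b = a" "a - k \<in> A" | "b = a" "a - k \<notin> A"
    by fastforce
  then show thesis
  proof cases
    case 1
    then show thesis
      using that[of 1] near by fastforce
  next
    case 2
    then show thesis
      using that[of "-1"] near by fastforce
  next
    case 3
    then have "\<bar>x - (a - k)\<bar> \<le> k" if "x \<in> A" for x
      using diam that by blast
    then show thesis
      using that[of "-1"] near \<open>1 \<le> k\<close> 3 by fastforce
  next
    case 4
    then have "x \<noteq> a - k" if "x \<in> A" for x
      using that by blast
    then show thesis
      using that[of 1] near \<open>1 \<le> k\<close> 4 by fastforce
  qed
qed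

lemma max_abs_step_down:
  fixes x y a b :: int
  assumes "\<bar>x - a\<bar> = (if x = 0 then 1 else \<bar>x\<bar> - 1)"
    and "\<bar>y - b\<bar> = (if y = 0 then 1 else \<bar>y\<bar> - 1)"
    and "even (x - y)" "x \<noteq> 0 \<or> y \<noteq> 0"
  shows "max (\<bar>x - a\<bar>) (\<bar>y - b\<bar>) = max (\<bar>x\<bar>) (\<bar>y\<bar>) - 1"
proof -
  have "\<bar>x\<bar> \<noteq> 1 \<and> \<bar>y\<bar> \<noteq> 1" if "x = 0 \<or> y = 0"
    using assms(3) that by (auto simp: abs_if)
  then show ?thesis
    using assms(1,2,4) by (auto simp: max_def split: if_splits)
qed

lemma l1_maximal_simplex_step_towards:
  assumes \<sigma>: "vr_maximal_simplex UNIV l1_dist k \<sigma>"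
    and s: "s \<in> \<sigma>" and s0: "s0 \<in> \<sigma>" and "s \<noteq> s0"
  obtains s' where "s' \<in> \<sigma>" "l1_dist s s' = 1" "l1_dist s0 s' = l1_dist s0 s - 1"
proof -
  have diam: "\<forall>p\<in>\<sigma>. \<forall>q\<in>\<sigma>. l1_dist p q \<le> k"
    using \<sigma> unfolding vr_maximal_simplex_def vr_simplex_def by blast
  have "0 < l1_dist s s0"
    using \<open>s \<noteq> s0\<close> l1_dist_nonneg[of s s0] l1_dist_eq_0_iff[of s s0] by linarith
  then have "1 \<le> k"
    using diam s s0 by fastforce
  have diam_u: "\<forall>x\<in>rot_u ` \<sigma>. \<forall>y\<in>rot_u ` \<sigma>. \<bar>x - y\<bar> \<le> k"
    and diam_v: "\<forall>x\<in>rot_v ` \<sigma>. \<forall>y\<in>rot_v ` \<sigma>. \<bar>x - y\<bar> \<le> k"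
    using diam by (auto simp: l1_dist_eq_max_rot)
  obtain a where a: "\<bar>a\<bar> = 1" "\<forall>q\<in>\<sigma>. \<bar>rot_u q - (rot_u s + a)\<bar> \<le> k"
    "\<bar>rot_u s0 - (rot_u s + a)\<bar>
       = (if rot_u s0 = rot_u s then 1 else \<bar>rot_u s0 - rot_u s\<bar> - 1)"
    using bounded_int_set_step[OF diam_u \<open>1 \<le> k\<close>, of "rot_u s" "rot_u s0"] s s0 by auto
  obtain b where b: "\<bar>b\<bar> = 1" "\<forall>q\<in>\<sigma>. \<bar>rot_v q - (rot_v s + b)\<bar> \<le> k"
    "\<bar>rot_v s0 - (rot_v s + b)\<bar>
       = (if rot_v s0 = rot_v s then 1 else \<bar>rot_v s0 - rot_v s\<bar> - 1)"
    using bounded_int_set_step[OF diam_v \<open>1 \<le> k\<close>, of "rot_v s" "rot_v s0"] s s0 by auto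
  obtain p where p: "rot_u p = rot_u s + a" "rot_v p = rot_v s + b"
    using obtain_rot_unit_step[OF a(1) b(1)] .
  have "p \<in> \<sigma>"
  proof (rule vr_maximal_simplex_absorbs[OF \<sigma>])
    show "\<forall>q\<in>\<sigma>. l1_dist p q \<le> k \<and> l1_dist q p \<le> k"
      using a(2) b(2) p by (auto simp: l1_dist_eq_max_rot abs_minus_commute)
  qed (use \<open>1 \<le> k\<close> in auto)
  moreover have "l1_dist s p = 1"
    using p a(1) b(1) by (simp add: l1_dist_eq_max_rot)
  moreover have "l1_dist s0 p = l1_dist s0 s - 1"
  proof -
    have "max (\<bar>(rot_u s0 - rot_u s) - a\<bar>) (\<bar>(rot_v s0 - rot_v s) - b\<bar>)
            = max (\<bar>rot_u s0 - rot_u s\<bar>) (\<bar>rot_v s0 - rot_v s\<bar>) - 1"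
    proof (rule max_abs_step_down)
      show "even (rot_u s0 - rot_u s - (rot_v s0 - rot_v s))"
        by (rule even_rot_diff)
      show "rot_u s0 - rot_u s \<noteq> 0 \<or> rot_v s0 - rot_v s \<noteq> 0"
        using \<open>s \<noteq> s0\<close> rot_eq_iff[of s0 s] by auto
    qed (use a(3) b(3) in \<open>simp_all add: diff_diff_eq\<close>)
    then show ?thesis
      by (simp add: l1_dist_eq_max_rot p diff_diff_eq)
  qed
  ultimately show thesis
    using that by blast
qed

lemma mod_add_diff_cancel:
  fixes x x' y n :: "'a :: euclidean_ring_cancel"
  assumes "x' mod n = x mod n"
  shows "(y + (x - x')) mod n = y mod n"
proof -
  have "(x - x') mod n = (x - x) mod n"
    by (rule mod_diff_cong[OF refl assms])
  then have "(y + (x - x')) mod n = (y + (x - x)) mod n"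
    by (rule mod_add_cong[OF refl])
  then show ?thesis
    by simp
qed

lemma mod_eq_imp_eq_if_abs_diff_less:
  fixes x y n :: int
  assumes "x mod n = y mod n" "\<bar>x - y\<bar> < n"
  shows "x = y"
proof (rule ccontr)
  assume "x \<noteq> y"
  have "n dvd x - y"
    using assms(1) by (simp add: mod_eq_dvd_iff)
  then have "\<bar>n\<bar> \<le> \<bar>x - y\<bar>"
    using \<open>x \<noteq> y\<close> by (intro dvd_imp_le_int) auto
  then show False
    using assms(2) by linarith
qed

lemma torus_proj_eq_imp_eq:
  assumes "torus_proj n x = torus_proj n y" "l1_dist x y < n"
  shows "x = y"
  using assms mod_eq_imp_eq_if_abs_diff_less[of "fst x" n "fst y"]
    mod_eq_imp_eq_if_abs_diff_less[of "snd x" n "snd y"]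
  by (auto simp: torus_proj_def l1_dist_def prod_eq_iff)

lemma torus_dist_proj_le: "torus_dist n (torus_proj n x) (torus_proj n y) \<le> l1_dist x y"
proof -
  have "(LEAST d. \<exists>x' y'. torus_proj n x' = torus_proj n x \<and> torus_proj n y' = torus_proj n y
          \<and> d = nat (l1_dist x' y')) \<le> nat (l1_dist x y)"
    by (rule Least_le) blast
  then show ?thesis
    unfolding torus_dist_def using l1_dist_nonneg[of x y] by linarith
qed

lemma torus_dist_obtain_lift:
  assumes "torus_dist n (torus_proj n x) c \<le> k" "c \<in> range (torus_proj n)"
  obtains y where "torus_proj n y = c" "l1_dist x y \<le> k"
proof -
  let ?P = "\<lambda>d. \<exists>x' y'. torus_proj n x' = torus_proj n x \<and> torus_proj n y' = c
              \<and> d = nat (l1_dist x' y')"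
  obtain y0 where "torus_proj n y0 = c"
    using assms(2) by blast
  then have "?P (nat (l1_dist x y0))"
    by blast
  then have "?P (Least ?P)"
    by (rule LeastI)
  then obtain x' y' where x': "torus_proj n x' = torus_proj n x" and y': "torus_proj n y' = c"
    and least: "Least ?P = nat (l1_dist x' y')"
    by blast
  have "l1_dist x' y' \<le> k"
    using assms(1) least l1_dist_nonneg[of x' y'] unfolding torus_dist_def by linarith
  \<comment> \<open>translate the minimising pair of lifts so that its first point becomes \<open>x\<close>\<close>
  define y where "y = (fst y' + (fst x - fst x'), snd y' + (snd x - snd x'))"
  have "torus_proj n y = c"
    using x' y' unfolding y_def torus_proj_def by (simp add: mod_add_diff_cancel)
  moreover have "l1_dist x y = l1_dist x' y'"
    by (simp add: l1_dist_def y_def abs_minus_commute)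
  ultimately show thesis
    using that \<open>l1_dist x' y' \<le> k\<close> by simp
qed

lemma l1_maximal_simplex_common_lift:
  assumes \<sigma>: "vr_maximal_simplex UNIV l1_dist k \<sigma>" and n: "2 * k + 1 < n"
    and c: "c \<in> range (torus_proj n)"
    and near: "\<forall>s\<in>\<sigma>. torus_dist n (torus_proj n s) c \<le> k"
  obtains y where "torus_proj n y = c" "\<forall>s\<in>\<sigma>. l1_dist s y \<le> k"
proof -
  obtain s0 where s0: "s0 \<in> \<sigma>"
    using \<sigma> unfolding vr_maximal_simplex_def vr_simplex_def by blast
  obtain y where y: "torus_proj n y = c" "l1_dist s0 y \<le> k"
    using torus_dist_obtain_lift near s0 c by blast
  have "l1_dist s y \<le> k" if "s \<in> \<sigma>" for s
    using that
  proof (induction "nat (l1_dist s0 s)" arbitrary: s rule: less_induct)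
    case less
    show ?case
    proof (cases "s = s0")
      case True
      then show ?thesis
        using y by simp
    next
      case False
      obtain s' where s': "s' \<in> \<sigma>" "l1_dist s s' = 1" "l1_dist s0 s' = l1_dist s0 s - 1"
        using l1_maximal_simplex_step_towards[OF \<sigma> less.prems s0 False] .
      have "l1_dist s' y \<le> k"
        using less.hyps[OF _ s'(1)] s'(3) l1_dist_nonneg[of s0 s'] by linarith
      obtain z where z: "torus_proj n z = c" "l1_dist s z \<le> k"
        using torus_dist_obtain_lift near less.prems c by blast
      have "l1_dist y z \<le> l1_dist y s' + l1_dist s' s + l1_dist s z"
        using l1_dist_triangle[of y z s'] l1_dist_triangle[of s' z s] by linarith
      then have "l1_dist y z < n"
        using \<open>l1_dist s' y \<le> k\<close> s'(2) z(2) n l1_dist_commute[of y s'] l1_dist_commute[of s' s]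
        by linarith
      then have "z = y"
        using torus_proj_eq_imp_eq y(1) z(1) by metis
      then show ?thesis
        using z(2) by simp
    qed
  qed
  then show thesis
    using that y(1) by blast
qed

theorem lemma5p2:
  fixes k n :: int and \<sigma> :: "(int \<times> int) set"
  assumes "0 \<le> k" and "2 * k + 1 < n"
    and "vr_maximal_simplex UNIV l1_dist k \<sigma>"
  shows "vr_maximal_simplex (range (torus_proj n)) (torus_dist n) k (torus_proj n ` \<sigma>)"
proof (rule vr_maximal_simplexI)
  have "vr_simplex UNIV l1_dist k \<sigma>"
    using assms(3) unfolding vr_maximal_simplex_def by blast
  then show "vr_simplex (range (torus_proj n)) (torus_dist n) k (torus_proj n ` \<sigma>)"
    by (rule vr_simplex_image) (auto intro: torus_dist_proj_le)
next
  fix c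
  assume c: "c \<in> range (torus_proj n)"
    and near: "\<forall>t\<in>torus_proj n ` \<sigma>. torus_dist n t c \<le> k"
  obtain y where y: "torus_proj n y = c" "\<forall>s\<in>\<sigma>. l1_dist s y \<le> k"
    using l1_maximal_simplex_common_lift[OF assms(3,2) c] near by auto
  have "y \<in> \<sigma>"
    using vr_maximal_simplex_absorbs[OF assms(3)] y(2) assms(1) l1_dist_commute by auto
  then show "c \<in> torus_proj n ` \<sigma>"
    using y(1) by blast
qed

end
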